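(* Let $\Gamma\subset\mathbb{C}^*$ act on $\mathbb{P}^1$ by $\gamma\cdot z=\gamma z$ on $\mathbb{C}^*$, fixing $0,\infty$. Consider pairs $(R,\sigma)$ with $R\in\mathbb{C}(z)$ and $\sigma:\Gamma\to\Gamma$ a homomorphism satisfying $R(\gamma z)=\sigma(\gamma)R(z)$ for all $z\in\mathbb{C}^*$, $\gamma\in\Gamma$ (strict meromorphic endomorphisms of $[\mathbb{P}^1/\Gamma]$). Then: (a) If $\Gamma=\mu_N$, these are exactly the pairs with $R(z)=z^m\frac{P(z^N)}{Q(z^N)}$, $\sigma(\zeta)=\zeta^m$, where $m\in\mathbb{Z}$ and $P,Q\in\mathbb{C}[t]$ are coprime. (b) If $\Gamma=q^{\mathbb{Z}}$ with $|q|\ne1$, every such pair has $R(z)=cz^n$ with $c\in\mathbb{C}^*$, $n\in\mathbb{Z}$. (c) If $\Gamma$ has accumulation in $\mathbb{C}^*$ (contains $q$ with $|q|\ne1$, or a sequence $\gamma_n\to1$ with $\gamma_n\ne1$), every such pair has $R(z)=cz^n$ with $c\in\mathbb{C}^*$, $n\in\mathbb{Z}$. In particular, outside the case $\Gamma$ finite, compactified reparametrizations are monomial.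
   Context: $\mu_N$ is the group of $N$-th roots of unity. *)

theory Defs
  imports "HOL-Analysis.Analysis" "HOL-Computational_Algebra.Polynomial_Factorial"
begin

definition mult_subgroup :: "complex set \<Rightarrow> bool" where
  "mult_subgroup G \<longleftrightarrow> 1 \<in> G \<and> 0 \<notin> G \<and> (\<forall>x\<in>G. \<forall>y\<in>G. x * y \<in> G) \<and> (\<forall>x\<in>G. inverse x \<in> G)"

text \<open>A group endomorphism of G (only its values on G matter).\<close>
definition grp_endo :: "complex set \<Rightarrow> (complex \<Rightarrow> complex) \<Rightarrow> bool" where
  "grp_endo G \<sigma> \<longleftrightarrow> (\<forall>x\<in>G. \<sigma> x \<in> G) \<and> (\<forall>x\<in>G. \<forall>y\<in>G. \<sigma> (x * y) = \<sigma> x * \<sigma> y)"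

definition mu :: "nat \<Rightarrow> complex set" where
  "mu N = {z. z ^ N = 1}"

text \<open>The rational function R = A/B (with B \<noteq> 0), together with \<sigma>, is a strict
  meromorphic endomorphism of [P^1/G]: R(\<gamma> z) = \<sigma>(\<gamma>) R(z) as rational functions,
  expressed by cross-multiplication on \<complex>^*.\<close>
definition strict_endo :: "complex set \<Rightarrow> complex poly \<Rightarrow> complex poly \<Rightarrow> (complex \<Rightarrow> complex) \<Rightarrow> bool" where
  "strict_endo G A B \<sigma> \<longleftrightarrow> B \<noteq> 0 \<and> grp_endo G \<sigma> \<and>
     (\<forall>\<gamma>\<in>G. \<forall>z. z \<noteq> 0 \<longrightarrow> poly A (\<gamma> * z) * poly B z = \<sigma> \<gamma> * poly A z * poly B (\<gamma> * z))"

definition monomial_rat :: "complex poly \<Rightarrow> complex poly \<Rightarrow> bool" where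
  "monomial_rat A B \<longleftrightarrow> (\<exists>c::complex. \<exists>n::int. c \<noteq> 0 \<and> (\<forall>z. z \<noteq> 0 \<longrightarrow> poly A z = c * z powi n * poly B z))"

end

theory Submission
  imports Defs "HOL-Computational_Algebra.Fundamental_Theorem_Algebra"
    "HOL-Computational_Algebra.Field_as_Ring"
begin

(* Write R = a/b in lowest terms. As \<sigma>(\<gamma>) \<noteq> 0, a zero or pole z \<noteq> 0 of R would give one at
   every \<gamma> z, i.e. infinitely many roots of a or of b when \<Gamma> is infinite; so a and b vanish only
   at 0 and R is a monomial. \<Gamma> is infinite as soon as it contains some q with |q| \<noteq> 1 (whose
   powers are distinct) or accumulates at 1.
   For \<Gamma> = \<mu>_N, \<sigma> is \<zeta> \<mapsto> \<zeta>^j because \<mu>_N is cyclic. Multiplying A and B by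
   \<Prod>_{\<zeta> \<noteq> 1} B(\<zeta> z) turns B into the rotation-invariant norm \<Prod>_\<zeta> B(\<zeta> z) and A into a
   polynomial with A(\<omega> z) = \<omega>^j A(z); comparing coefficients, these have the shapes Q(z^N) and
   z^j P(z^N). *)

definition dilation_rel :: "'a::comm_ring_1 \<Rightarrow> 'a \<Rightarrow> 'a poly \<Rightarrow> 'a poly \<Rightarrow> bool" where
  "dilation_rel \<gamma> s A B \<longleftrightarrow> pcompose A [:0, \<gamma>:] * B = smult s (A * pcompose B [:0, \<gamma>:])"

lemma poly_dilation [simp]: "poly (pcompose p [:0, \<gamma>:]) z = poly p (\<gamma> * z)"
  by (simp add: poly_pcompose mult.commute)

lemma pcompose_dilation_eq_0_iff [simp]:
  fixes p :: "'a::idom poly"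
  assumes "\<gamma> \<noteq> 0"
  shows "pcompose p [:0, \<gamma>:] = 0 \<longleftrightarrow> p = 0"
  using assms by (simp add: pcompose_eq_0_iff)

lemma pcompose_dilation_dilation:
  "pcompose (pcompose p [:0, a:]) [:0, b:] = pcompose p [:0, a * b:]"
  by (simp add: pcompose_assoc[symmetric] pcompose_pCons)

lemma poly_eqI_cofinite:
  fixes p q :: "'a::{idom,ring_char_0} poly"
  assumes "finite S" and "\<And>z. z \<notin> S \<Longrightarrow> poly p z = poly q z"
  shows "p = q"
proof (rule ccontr)
  assume "p \<noteq> q"
  then have "finite {z. poly (p - q) z = 0}" by (intro poly_roots_finite) simp
  moreover have "- S \<subseteq> {z. poly (p - q) z = 0}" using assms(2) by auto
  ultimately have "finite (- S)" by (rule finite_subset[rotated])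
  with assms(1) show False using infinite_UNIV_char_0 by (auto simp: finite_compl)
qed

lemma strict_endo_iff_dilation_rel:
  "strict_endo G A B \<sigma> \<longleftrightarrow> B \<noteq> 0 \<and> grp_endo G \<sigma> \<and> (\<forall>\<gamma>\<in>G. dilation_rel \<gamma> (\<sigma> \<gamma>) A B)"
proof -
  have "dilation_rel \<gamma> (\<sigma> \<gamma>) A B \<longleftrightarrow>
      (\<forall>z. z \<noteq> 0 \<longrightarrow> poly A (\<gamma> * z) * poly B z = \<sigma> \<gamma> * poly A z * poly B (\<gamma> * z))" for \<gamma>
  proof
    assume "dilation_rel \<gamma> (\<sigma> \<gamma>) A B"
    then show "\<forall>z. z \<noteq> 0 \<longrightarrow> poly A (\<gamma> * z) * poly B z = \<sigma> \<gamma> * poly A z * poly B (\<gamma> * z)"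
      unfolding dilation_rel_def by (metis poly_dilation poly_mult poly_smult mult.assoc)
  next
    assume "\<forall>z. z \<noteq> 0 \<longrightarrow> poly A (\<gamma> * z) * poly B z = \<sigma> \<gamma> * poly A z * poly B (\<gamma> * z)"
    then show "dilation_rel \<gamma> (\<sigma> \<gamma>) A B"
      unfolding dilation_rel_def by (intro poly_eqI_cofinite[of "{0}"]) (auto simp: mult.assoc)
  qed
  then show ?thesis unfolding strict_endo_def by blast
qed

lemma dilation_rel_mult_common_factor_iff:
  fixes g a b :: "'a::idom poly"
  assumes "\<gamma> \<noteq> 0" and "g \<noteq> 0"
  shows "dilation_rel \<gamma> s (g * a) (g * b) \<longleftrightarrow> dilation_rel \<gamma> s a b"
proof -
  have "pcompose g [:0, \<gamma>:] * g \<noteq> 0" using assms by simp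
  moreover have "dilation_rel \<gamma> s (g * a) (g * b) \<longleftrightarrow>
      (pcompose g [:0, \<gamma>:] * g) * (pcompose a [:0, \<gamma>:] * b - smult s (a * pcompose b [:0, \<gamma>:])) = 0"
    unfolding dilation_rel_def pcompose_mult by (simp add: algebra_simps)
  ultimately show ?thesis unfolding dilation_rel_def by simp
qed

lemma dilation_rel_roots_invariant:
  fixes a b :: "'a::field poly"
  assumes "dilation_rel \<gamma> s a b" and "coprime a b" and "s \<noteq> 0"
  shows "poly a z = 0 \<Longrightarrow> poly a (\<gamma> * z) = 0"
    and "poly b z = 0 \<Longrightarrow> poly b (\<gamma> * z) = 0"
proof -
  have eq: "poly a (\<gamma> * z) * poly b z = s * poly a z * poly b (\<gamma> * z)"
    using arg_cong[OF assms(1)[unfolded dilation_rel_def], of "\<lambda>p. poly p z"] by simp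
  show "poly a (\<gamma> * z) = 0" if "poly a z = 0"
    using eq that coprime_poly_0[OF assms(2), of z] by simp
  show "poly b (\<gamma> * z) = 0" if "poly b z = 0"
    using eq that coprime_poly_0[OF assms(2), of z] assms(3) by simp
qed

lemma orbit_not_in_roots:
  fixes p :: "'a::idom poly"
  assumes "p \<noteq> 0" and "z \<noteq> 0" and "infinite G"
  shows "\<exists>\<gamma>\<in>G. poly p (\<gamma> * z) \<noteq> 0"
proof (rule ccontr)
  assume "\<not> ?thesis"
  then have "(\<lambda>\<gamma>. \<gamma> * z) ` G \<subseteq> {x. poly p x = 0}" by auto
  then have "finite ((\<lambda>\<gamma>. \<gamma> * z) ` G)" using poly_roots_finite[OF assms(1)] by (rule finite_subset)
  moreover have "inj_on (\<lambda>\<gamma>. \<gamma> * z) G" using assms(2) by (auto simp: inj_on_def)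
  ultimately show False using assms(3) finite_imageD by blast
qed

lemma complex_poly_eq_monom_if_roots_zero:
  fixes p :: "complex poly"
  assumes "\<And>z. poly p z = 0 \<Longrightarrow> z = 0"
  shows "p = monom (lead_coeff p) (order 0 p)"
proof -
  have "(\<Prod>z\<in>{0}. [:-z, 1:] ^ order z p) = (\<Prod>z | poly p z = 0. [:-z, 1:] ^ order z p)"
    by (rule prod.mono_neutral_right) (use assms order_0I in force)+
  then show ?thesis using complex_poly_decompose[of p] by (simp add: monom_altdef)
qed

lemma monomial_rat_mult_monom:
  assumes "c \<noteq> 0" and "d \<noteq> 0"
  shows "monomial_rat (g * monom c k) (g * monom d l)"
  unfolding monomial_rat_def
proof (intro exI conjI allI impI)
  show "c / d \<noteq> 0" using assms by simp
  fix z :: complex assume "z \<noteq> 0"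
  then have "z powi (int k - int l) * z ^ l = z ^ k" by (simp add: power_int_diff)
  then show "poly (g * monom c k) z = c / d * z powi (int k - int l) * poly (g * monom d l) z"
    using assms by (simp add: poly_monom field_simps)
qed

theorem strict_endo_infinite_monomial:
  assumes "0 \<notin> G" and "infinite G" and "strict_endo G A B \<sigma>" and "A \<noteq> 0"
  shows "monomial_rat A B"
proof -
  from assms(3) have "B \<noteq> 0" and endo: "grp_endo G \<sigma>"
    and rel: "\<And>\<gamma>. \<gamma> \<in> G \<Longrightarrow> dilation_rel \<gamma> (\<sigma> \<gamma>) A B"
    by (simp_all add: strict_endo_iff_dilation_rel)
  define g where "g = gcd A B"
  define a where "a = A div g"
  define b where "b = B div g"
  have "g \<noteq> 0" and A: "A = g * a" and B: "B = g * b"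
    using \<open>B \<noteq> 0\<close> by (simp_all add: g_def a_def b_def)
  have "coprime a b" unfolding a_def b_def g_def using \<open>B \<noteq> 0\<close> by (intro div_gcd_coprime) simp
  have "a * b \<noteq> 0" using assms(4) \<open>B \<noteq> 0\<close> A B by auto
  have \<sigma>_nz: "\<sigma> \<gamma> \<noteq> 0" if "\<gamma> \<in> G" for \<gamma>
    using endo that assms(1) unfolding grp_endo_def by metis
  have rel_ab: "dilation_rel \<gamma> (\<sigma> \<gamma>) a b" if "\<gamma> \<in> G" for \<gamma>
    using rel[OF that] that assms(1) dilation_rel_mult_common_factor_iff[OF _ \<open>g \<noteq> 0\<close>]
    unfolding A B by metis
  have roots_zero: "z = 0" if "poly (a * b) z = 0" for z
  proof (rule ccontr)
    assume "z \<noteq> 0"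
    then obtain \<gamma> where "\<gamma> \<in> G" and "poly (a * b) (\<gamma> * z) \<noteq> 0"
      using orbit_not_in_roots[OF \<open>a * b \<noteq> 0\<close> _ assms(2)] by blast
    then show False
      using that dilation_rel_roots_invariant[OF rel_ab \<open>coprime a b\<close> \<sigma>_nz] by auto
  qed
  have "a = monom (lead_coeff a) (order 0 a)" and "b = monom (lead_coeff b) (order 0 b)"
    using roots_zero by (auto intro!: complex_poly_eq_monom_if_roots_zero)
  moreover have "lead_coeff a \<noteq> 0" and "lead_coeff b \<noteq> 0" using \<open>a * b \<noteq> 0\<close> by auto
  ultimately show ?thesis unfolding A B by (metis monomial_rat_mult_monom)
qed

lemma infinite_if_powers_mem:
  fixes q :: "'a::real_normed_div_algebra"
  assumes "q \<noteq> 0" and "norm q \<noteq> 1" and "\<And>n. q ^ n \<in> G"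
  shows "infinite G"
proof
  assume "finite G"
  moreover have "range (\<lambda>n. q ^ n) \<subseteq> G" using assms(3) by auto
  ultimately have "finite (range (\<lambda>n. q ^ n))" by (rule finite_subset[rotated])
  moreover have "inj (\<lambda>n. q ^ n)"
    using assms(1,2) by (intro injI) (metis norm_power power_inject_exp' zero_less_norm_iff)
  ultimately show False using finite_imageD by fastforce
qed

lemma infinite_if_accumulating_sequence:
  fixes a :: "'a::metric_space"
  assumes "\<And>n. g n \<in> S \<and> g n \<noteq> a" and "g \<longlonglongrightarrow> a"
  shows "infinite S"
proof -
  have "a islimpt S" using assms by (auto simp: islimpt_sequential)
  then show ?thesis using islimpt_finite by blast
qed

lemma mult_subgroup_power_mem:
  assumes "mult_subgroup G" and "x \<in> G"
  shows "x ^ n \<in> G"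
  using assms by (induction n) (auto simp: mult_subgroup_def)

lemma mult_subgroup_infiniteI:
  assumes "mult_subgroup G"
    and "(\<exists>q\<in>G. norm q \<noteq> 1) \<or> (\<exists>g. (\<forall>n. g n \<in> G \<and> g n \<noteq> 1) \<and> g \<longlonglongrightarrow> 1)"
  shows "infinite G"
  using assms(2)
proof (elim disjE bexE exE conjE)
  fix q assume "q \<in> G" and "norm q \<noteq> 1"
  moreover have "q \<noteq> 0" using \<open>q \<in> G\<close> assms(1) by (auto simp: mult_subgroup_def)
  ultimately show ?thesis
    using infinite_if_powers_mem mult_subgroup_power_mem[OF assms(1)] by blast
qed (use infinite_if_accumulating_sequence in blast)

corollary strict_endo_subgroup_monomial:
  assumes "mult_subgroup G" and "infinite G" and "strict_endo G A B \<sigma>" and "A \<noteq> 0"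
  shows "monomial_rat A B"
  using assms strict_endo_infinite_monomial by (auto simp: mult_subgroup_def)

corollary strict_endo_powers_monomial:
  assumes "q \<noteq> 0" and "norm q \<noteq> 1"
    and "strict_endo (range (\<lambda>k::int. q powi k)) A B \<sigma>" and "A \<noteq> 0"
  shows "monomial_rat A B"
proof (rule strict_endo_infinite_monomial[OF _ _ assms(3,4)])
  show "0 \<notin> range (\<lambda>k::int. q powi k)" using assms(1) by auto
  have "q ^ n \<in> range (\<lambda>k::int. q powi k)" for n
    by (rule range_eqI[of _ _ "int n"]) simp
  with assms(1,2) show "infinite (range (\<lambda>k::int. q powi k))" by (rule infinite_if_powers_mem)
qed

definition prim_root :: "nat \<Rightarrow> complex" where
  "prim_root N = exp (2 * of_real pi * \<i> / of_nat N)"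

lemma prim_root_power: "prim_root N ^ k = exp (2 * of_real pi * \<i> * of_nat k / of_nat N)"
proof -
  have "prim_root N ^ k = exp (of_nat k * (2 * of_real pi * \<i> / of_nat N))"
    unfolding prim_root_def by (rule exp_of_nat_mult[symmetric])
  then show ?thesis by (simp add: field_simps)
qed

lemma prim_root_power_eq_iff:
  "N > 0 \<Longrightarrow> prim_root N ^ k = prim_root N ^ l \<longleftrightarrow> k mod N = l mod N"
  unfolding prim_root_power by (simp add: complex_root_unity_eq)

lemma mu_eq_prim_root_powers: "N > 0 \<Longrightarrow> mu N = (\<lambda>k. prim_root N ^ k) ` {..<N}"
  using complex_roots_unity[of N] by (auto simp: mu_def prim_root_power)

lemma prim_root_mem_mu: "N > 0 \<Longrightarrow> prim_root N \<in> mu N"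
  using prim_root_power_eq_iff[of N N 0] by (simp add: mu_def power_mult_distrib flip: power_mult)

lemma mult_subgroup_mu: "N > 0 \<Longrightarrow> mult_subgroup (mu N)"
  by (auto simp: mult_subgroup_def mu_def power_mult_distrib power_inverse power_0_left)

lemma grp_endo_one:
  assumes "mult_subgroup G" and "grp_endo G \<sigma>"
  shows "\<sigma> 1 = 1"
proof -
  have "1 \<in> G" and "\<sigma> 1 \<in> G" and "0 \<notin> G"
    using assms by (auto simp: mult_subgroup_def grp_endo_def)
  moreover have "\<sigma> 1 = \<sigma> 1 * \<sigma> 1" using assms(2) \<open>1 \<in> G\<close> by (metis grp_endo_def mult_1)
  ultimately show ?thesis by (metis mult_cancel_left1)
qed

lemma grp_endo_power:
  assumes "mult_subgroup G" and "grp_endo G \<sigma>" and "x \<in> G"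
  shows "\<sigma> (x ^ k) = \<sigma> x ^ k"
proof (induction k)
  case 0
  show ?case using grp_endo_one[OF assms(1,2)] by simp
next
  case (Suc k)
  then show ?case
    using assms mult_subgroup_power_mem[OF assms(1,3)] by (simp add: grp_endo_def)
qed

lemma grp_endo_mu_eq_power:
  assumes "N > 0" and "grp_endo (mu N) \<sigma>"
  obtains j where "j < N" and "\<forall>\<zeta>\<in>mu N. \<sigma> \<zeta> = \<zeta> ^ j"
proof -
  let ?\<omega> = "prim_root N"
  have "\<sigma> ?\<omega> \<in> mu N" using assms prim_root_mem_mu by (auto simp: grp_endo_def)
  then obtain j where "j < N" and j: "\<sigma> ?\<omega> = ?\<omega> ^ j"
    using mu_eq_prim_root_powers[OF assms(1)] by auto
  have "\<sigma> \<zeta> = \<zeta> ^ j" if "\<zeta> \<in> mu N" for \<zeta>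
  proof -
    from that obtain k where k: "\<zeta> = ?\<omega> ^ k"
      unfolding mu_eq_prim_root_powers[OF assms(1)] by blast
    have "\<sigma> \<zeta> = (?\<omega> ^ j) ^ k"
      unfolding k grp_endo_power[OF mult_subgroup_mu[OF assms(1)] assms(2) prim_root_mem_mu[OF assms(1)]] j ..
    with k show ?thesis by (metis power_mult mult.commute)
  qed
  with \<open>j < N\<close> show thesis using that by blast
qed

lemma coeff_pcompose_monom:
  fixes P :: "'a::comm_semiring_1 poly"
  assumes "N > 0"
  shows "coeff (pcompose P (monom 1 N)) k = (if N dvd k then coeff P (k div N) else 0)"
proof (induction P arbitrary: k)
  case (pCons a P)
  show ?case
  proof (cases "k < N")
    case True
    then show ?thesis using assms by (auto simp: pcompose_pCons coeff_monom_mult coeff_pCons dvd_imp_le split: nat.split)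
  next
    case False
    then have "N dvd k - N \<longleftrightarrow> N dvd k" and "(k - N) div N = k div N - 1" and "k div N \<noteq> 0"
      using assms by (auto simp: dvd_minus_self le_div_geq div_eq_0_iff)
    then show ?thesis
      using False pCons.IH assms by (auto simp: pcompose_pCons coeff_monom_mult coeff_pCons split: nat.split)
  qed
qed simp

lemma poly_decompose_residue_class:
  fixes p :: "'a::comm_semiring_1 poly"
  assumes "N > 0" and "r < N" and "\<And>k. coeff p k \<noteq> 0 \<Longrightarrow> k mod N = r"
  obtains P where "p = monom 1 r * pcompose P (monom 1 N)"
proof
  define P where "P = (\<Sum>j\<le>degree p. monom (coeff p (r + j * N)) j)"
  have coeff_P: "coeff P j = coeff p (r + j * N)" for j
  proof -
    have "j \<le> r + j * N" using assms(1) by (simp add: trans_le_add2)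
    then show ?thesis by (auto simp: P_def coeff_sum coeff_eq_0)
  qed
  show "p = monom 1 r * pcompose P (monom 1 N)"
  proof (rule poly_eqI)
    fix k
    show "coeff p k = coeff (monom 1 r * pcompose P (monom 1 N)) k"
    proof (cases "r \<le> k \<and> N dvd k - r")
      case True
      then have "r + (k - r) div N * N = k" by simp
      then show ?thesis using True assms(1) by (simp add: coeff_monom_mult coeff_pcompose_monom coeff_P)
    next
      case False
      have "coeff p k = 0"
      proof (rule ccontr)
        assume "coeff p k \<noteq> 0"
        then have "k mod N = r" by (rule assms(3))
        with False show False by (metis le_add1 mod_div_mult_eq add_diff_cancel_left' dvd_triv_right)
      qed
      with False assms(1) show ?thesis by (auto simp: coeff_monom_mult coeff_pcompose_monom)
    qed
  qed
qed

lemma eigenpoly_prim_root_decompose: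
  fixes p :: "complex poly"
  assumes "N > 0" and "r < N" and "pcompose p [:0, prim_root N:] = smult (prim_root N ^ r) p"
  obtains P where "p = monom 1 r * pcompose P (monom 1 N)"
proof (rule poly_decompose_residue_class[OF assms(1,2)])
  fix k assume "coeff p k \<noteq> 0"
  moreover have "prim_root N ^ k * coeff p k = prim_root N ^ r * coeff p k"
    using arg_cong[OF assms(3), of "\<lambda>q. coeff q k"] by (simp add: coeff_pcompose_linear)
  ultimately show "k mod N = r" using prim_root_power_eq_iff[OF assms(1)] assms(2) by simp
qed

lemma prod_dilations_invariant:
  fixes B :: "'a::field poly"
  assumes "\<And>x. x \<in> G \<Longrightarrow> x * \<gamma> \<in> G" and "\<And>x. x \<in> G \<Longrightarrow> x / \<gamma> \<in> G" and "\<gamma> \<noteq> 0"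
  shows "pcompose (\<Prod>\<zeta>\<in>G. pcompose B [:0, \<zeta>:]) [:0, \<gamma>:] = (\<Prod>\<zeta>\<in>G. pcompose B [:0, \<zeta>:])"
proof -
  have "bij_betw (\<lambda>\<zeta>. \<zeta> * \<gamma>) G G"
    by (rule bij_betwI[where g = "\<lambda>\<zeta>. \<zeta> / \<gamma>"]) (use assms in auto)
  then have "(\<Prod>\<zeta>\<in>G. pcompose B [:0, \<zeta> * \<gamma>:]) = (\<Prod>\<zeta>\<in>G. pcompose B [:0, \<zeta>:])"
    by (rule prod.reindex_bij_betw)
  then show ?thesis by (simp add: pcompose_prod pcompose_dilation_dilation)
qed

lemma coprime_fraction_cancel:
  fixes P' Q' :: "complex poly"
  assumes "Q' \<noteq> 0" and "degree X > 0" and "A * pcompose Q' X = M * pcompose P' X * B"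
  obtains P Q where "coprime P Q" and "Q \<noteq> 0" and "A * pcompose Q X = M * pcompose P X * B"
proof
  define d where "d = gcd P' Q'"
  show "coprime (P' div d) (Q' div d)" unfolding d_def using assms(1) by (intro div_gcd_coprime) simp
  have "d \<noteq> 0" and P': "P' = d * (P' div d)" and Q': "Q' = d * (Q' div d)"
    using assms(1) by (simp_all add: d_def)
  then show "Q' div d \<noteq> 0" using assms(1) by auto
  have "pcompose d X * (A * pcompose (Q' div d) X) = pcompose d X * (M * pcompose (P' div d) X * B)"
    using assms(3) by (subst (asm) P', subst (asm) Q') (simp add: pcompose_mult ac_simps)
  moreover have "pcompose d X \<noteq> 0" using \<open>d \<noteq> 0\<close> assms(2) by (simp add: pcompose_eq_0_iff)
  ultimately show "A * pcompose (Q' div d) X = M * pcompose (P' div d) X * B" by simp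
qed

lemma strict_endo_mu_imp_fraction:
  assumes "N > 0" and "strict_endo (mu N) A B \<sigma>"
  obtains j P Q where "coprime P Q" and "Q \<noteq> 0"
    and "A * pcompose Q (monom 1 N) = monom 1 j * pcompose P (monom 1 N) * B"
    and "\<forall>\<zeta>\<in>mu N. \<sigma> \<zeta> = \<zeta> ^ j"
proof -
  let ?\<omega> = "prim_root N"
  from assms(2) have "B \<noteq> 0" and endo: "grp_endo (mu N) \<sigma>"
    and rel: "\<And>\<gamma>. \<gamma> \<in> mu N \<Longrightarrow> dilation_rel \<gamma> (\<sigma> \<gamma>) A B"
    by (simp_all add: strict_endo_iff_dilation_rel)
  obtain j where "j < N" and \<sigma>: "\<forall>\<zeta>\<in>mu N. \<sigma> \<zeta> = \<zeta> ^ j"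
    using grp_endo_mu_eq_power[OF assms(1) endo] by blast
  have \<omega>: "?\<omega> \<in> mu N" "?\<omega> \<noteq> 0" using prim_root_mem_mu[OF assms(1)] by (auto simp: prim_root_def)
  have "0 \<notin> mu N" and "1 \<in> mu N" and "finite (mu N)"
    using assms(1) by (auto simp: mu_def finite_roots_unity power_0_left)
  define C where "C = (\<Prod>\<zeta>\<in>mu N - {1}. pcompose B [:0, \<zeta>:])"
  have "C \<noteq> 0" using \<open>B \<noteq> 0\<close> \<open>0 \<notin> mu N\<close> \<open>finite (mu N)\<close>
    by (auto simp: C_def) (metis pcompose_dilation_eq_0_iff)
  have "C * B = (\<Prod>\<zeta>\<in>mu N. pcompose B [:0, \<zeta>:])"
    using prod.remove[OF \<open>finite (mu N)\<close> \<open>1 \<in> mu N\<close>, of "\<lambda>\<zeta>. pcompose B [:0, \<zeta>:]"]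
    by (simp add: C_def mult.commute)
  also have "pcompose \<dots> [:0, ?\<omega>:] = \<dots>"
    using mult_subgroup_mu[OF assms(1)] \<omega>
    by (intro prod_dilations_invariant) (auto simp: mult_subgroup_def divide_inverse)
  finally have invariant: "pcompose (C * B) [:0, ?\<omega>:] = C * B"
    using \<open>C * B = _\<close> by simp
  have "dilation_rel ?\<omega> (?\<omega> ^ j) (C * A) (C * B)"
    using rel[OF \<omega>(1)] \<sigma> \<omega> \<open>C \<noteq> 0\<close> by (simp add: dilation_rel_mult_common_factor_iff)
  then have "pcompose (C * A) [:0, ?\<omega>:] * (C * B) = smult (?\<omega> ^ j) (C * A) * (C * B)"
    by (simp add: dilation_rel_def invariant)
  then have "pcompose (C * A) [:0, ?\<omega>:] = smult (?\<omega> ^ j) (C * A)"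
    using \<open>C \<noteq> 0\<close> \<open>B \<noteq> 0\<close> by (simp del: mult_smult_left)
  then obtain P' where P': "C * A = monom 1 j * pcompose P' (monom 1 N)"
    using eigenpoly_prim_root_decompose[OF assms(1) \<open>j < N\<close>] by blast
  obtain Q' where Q': "C * B = pcompose Q' (monom 1 N)"
  proof (rule eigenpoly_prim_root_decompose[OF assms(1) assms(1), of "C * B"])
    show "pcompose (C * B) [:0, ?\<omega>:] = smult (?\<omega> ^ 0) (C * B)" using invariant by simp
  qed (auto intro: that)
  have "Q' \<noteq> 0" using Q' \<open>C \<noteq> 0\<close> \<open>B \<noteq> 0\<close> by auto
  moreover have "A * pcompose Q' (monom 1 N) = monom 1 j * pcompose P' (monom 1 N) * B"
    by (metis P' Q' mult.assoc mult.left_commute)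
  ultimately obtain P Q where "coprime P Q" "Q \<noteq> 0"
    "A * pcompose Q (monom 1 N) = monom 1 j * pcompose P (monom 1 N) * B"
    using coprime_fraction_cancel assms(1) by (metis degree_monom_eq one_neq_zero)
  with \<sigma> show thesis using that by blast
qed

lemma fraction_imp_strict_endo_mu:
  assumes "N > 0" and "B \<noteq> 0" and "Q \<noteq> 0"
    and eq: "\<forall>z. z \<noteq> 0 \<longrightarrow> poly A z * poly Q (z ^ N) = z powi m * poly P (z ^ N) * poly B z"
    and \<sigma>: "\<forall>\<zeta>\<in>mu N. \<sigma> \<zeta> = \<zeta> powi m"
  shows "strict_endo (mu N) A B \<sigma>"
proof -
  have "grp_endo (mu N) \<sigma>"
    unfolding grp_endo_def
  proof (intro conjI ballI)
    fix x y assume "x \<in> mu N" and "y \<in> mu N"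
    then show "\<sigma> (x * y) = \<sigma> x * \<sigma> y"
      using \<sigma> by (simp add: mu_def power_mult_distrib power_int_mult_distrib)
  next
    fix x assume "x \<in> mu N"
    moreover have "(x powi m) ^ N = (x ^ N) powi m"
      by (simp add: power_int_power power_int_power' mult.commute)
    ultimately show "\<sigma> x \<in> mu N" using \<sigma> by (simp add: mu_def)
  qed
  moreover have "dilation_rel \<gamma> (\<sigma> \<gamma>) A B" if "\<gamma> \<in> mu N" for \<gamma>
  proof -
    have "\<gamma> \<noteq> 0" and "\<gamma> ^ N = 1" using that assms(1) by (auto simp: mu_def power_0_left)
    define S where "S = {0} \<union> {z. poly (pcompose Q (monom 1 N)) z = 0}"
    have "finite S"
      using assms(1,3) by (auto simp: S_def pcompose_eq_0_iff degree_monom_eq intro: poly_roots_finite)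
    have "poly A (\<gamma> * z) * poly B z = \<gamma> powi m * poly A z * poly B (\<gamma> * z)" if "z \<notin> S" for z
    proof -
      have "z \<noteq> 0" and Qz: "poly Q (z ^ N) \<noteq> 0"
        using that by (auto simp: S_def poly_pcompose poly_monom)
      have "(\<gamma> * z) ^ N = z ^ N" using \<open>\<gamma> ^ N = 1\<close> by (simp add: power_mult_distrib)
      then have "poly Q (z ^ N) * (poly A (\<gamma> * z) * poly B z)
          = poly A (\<gamma> * z) * poly Q ((\<gamma> * z) ^ N) * poly B z"
        by (simp add: ac_simps)
      also have "\<dots> = (\<gamma> * z) powi m * poly P (z ^ N) * poly B (\<gamma> * z) * poly B z"
        using eq[rule_format, of "\<gamma> * z"] \<open>\<gamma> \<noteq> 0\<close> \<open>z \<noteq> 0\<close> \<open>(\<gamma> * z) ^ N = z ^ N\<close> by simp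
      also have "\<dots> = \<gamma> powi m * poly B (\<gamma> * z) * (z powi m * poly P (z ^ N) * poly B z)"
        by (simp add: power_int_mult_distrib ac_simps)
      also have "\<dots> = poly Q (z ^ N) * (\<gamma> powi m * poly A z * poly B (\<gamma> * z))"
        using eq \<open>z \<noteq> 0\<close> by (simp add: ac_simps)
      finally show ?thesis using Qz by simp
    qed
    then show ?thesis
      unfolding dilation_rel_def using \<sigma> that \<open>finite S\<close> by (intro poly_eqI_cofinite) (auto simp: mult.assoc)
  qed
  ultimately show ?thesis using assms(2) by (simp add: strict_endo_iff_dilation_rel)
qed

theorem strict_endo_mu_iff:
  assumes "N > 0" and "B \<noteq> 0"
  shows "strict_endo (mu N) A B \<sigma> \<longleftrightarrow>
    (\<exists>m::int. \<exists>P Q. coprime P Q \<and> Q \<noteq> 0 \<and>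
      (\<forall>z. z \<noteq> 0 \<longrightarrow> poly A z * poly Q (z ^ N) = z powi m * poly P (z ^ N) * poly B z) \<and>
      (\<forall>\<zeta>\<in>mu N. \<sigma> \<zeta> = \<zeta> powi m))"
proof
  assume "strict_endo (mu N) A B \<sigma>"
  then obtain j P Q where "coprime P Q" and "Q \<noteq> 0"
    and eq: "A * pcompose Q (monom 1 N) = monom 1 j * pcompose P (monom 1 N) * B"
    and "\<forall>\<zeta>\<in>mu N. \<sigma> \<zeta> = \<zeta> ^ j"
    by (rule strict_endo_mu_imp_fraction[OF assms(1)])
  moreover have "poly A z * poly Q (z ^ N) = z ^ j * poly P (z ^ N) * poly B z" for z
    using arg_cong[OF eq, of "\<lambda>p. poly p z"] by (simp add: poly_pcompose poly_monom)
  ultimately show "\<exists>m::int. \<exists>P Q. coprime P Q \<and> Q \<noteq> 0 \<and>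
      (\<forall>z. z \<noteq> 0 \<longrightarrow> poly A z * poly Q (z ^ N) = z powi m * poly P (z ^ N) * poly B z) \<and>
      (\<forall>\<zeta>\<in>mu N. \<sigma> \<zeta> = \<zeta> powi m)"
    by (intro exI[of _ "int j"] exI[of _ P] exI[of _ Q]) simp
qed (use assms fraction_imp_strict_endo_mu in blast)

theorem mainTheorem10:
  shows
   "(\<forall>N::nat. N > 0 \<longrightarrow> (\<forall>A B \<sigma>. B \<noteq> 0 \<longrightarrow>
       (strict_endo (mu N) A B \<sigma> \<longleftrightarrow>
        (\<exists>m::int. \<exists>P Q :: complex poly. coprime P Q \<and> Q \<noteq> 0 \<and>
            (\<forall>z. z \<noteq> 0 \<longrightarrow> poly A z * poly Q (z ^ N) = z powi m * poly P (z ^ N) * poly B z) \<and>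
            (\<forall>\<zeta>\<in>mu N. \<sigma> \<zeta> = \<zeta> powi m)))))
    \<and> (\<forall>q::complex. q \<noteq> 0 \<and> norm q \<noteq> 1 \<longrightarrow> (\<forall>A B \<sigma>.
         strict_endo (range (\<lambda>k::int. q powi k)) A B \<sigma> \<and> A \<noteq> 0 \<longrightarrow> monomial_rat A B))
    \<and> (\<forall>G. mult_subgroup G \<and>
          ((\<exists>q\<in>G. norm q \<noteq> 1) \<or> (\<exists>g::nat \<Rightarrow> complex. (\<forall>n. g n \<in> G \<and> g n \<noteq> 1) \<and> g \<longlonglongrightarrow> 1)) \<longrightarrow>
         (\<forall>A B \<sigma>. strict_endo G A B \<sigma> \<and> A \<noteq> 0 \<longrightarrow> monomial_rat A B))
    \<and> (\<forall>G. mult_subgroup G \<and> infinite G \<longrightarrow>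
         (\<forall>A B \<sigma>. strict_endo G A B \<sigma> \<and> A \<noteq> 0 \<longrightarrow> monomial_rat A B))"
  apply (intro conjI allI impI; (elim conjE)?)
  subgoal by (rule strict_endo_mu_iff)
  subgoal by (rule strict_endo_powers_monomial)
  subgoal by (rule strict_endo_subgroup_monomial[OF _ mult_subgroup_infiniteI])
  subgoal by (rule strict_endo_subgroup_monomial)
  done

end
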